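(* Let $m>1$ and $a\in\mathbb{Z}_m$ with $2a^2-2a+1\equiv0\pmod m$, and let $(\mathbb{Z}_m,\cdot)$ be the quadratical quasigroup $x\cdot y=ax+(1-a)y\pmod m$. Then there is exactly one $k\in\{1,\dots,m-1\}$ such that $(\mathbb{Z}_m,\cdot)$ is $k$-translatable with respect to the ordering $0,1,\dots,m-1$; this $k$ is the solution of $(a-1)k\equiv a\pmod m$, and it satisfies $1<k<m-1$.
   Context: Every quadratical quasigroup induced by the additive group $\mathbb{Z}_m$ has this form. A finite groupoid with ordering $q_1,\dots,q_n$ is $k$-translatable ($1\le k<n$) with respect to this ordering if $q_i\cdot q_j=q_{i-1}\cdot q_{j-k}$ for all $i\in\{2,\dots,n\}$, $j\in\{1,\dots,n\}$, indices taken modulo $n$ in $\{1,\dots,n\}$. *)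

theory Defs
  imports Main "HOL-Number_Theory.Cong"
begin

definition idx_mod :: "int \<Rightarrow> int \<Rightarrow> int" where
  "idx_mod n t = ((t - 1) mod n) + 1"

definition k_translatable :: "('a \<Rightarrow> 'a \<Rightarrow> 'a) \<Rightarrow> (int \<Rightarrow> 'a) \<Rightarrow> int \<Rightarrow> int \<Rightarrow> bool" where
  "k_translatable opr q n k \<longleftrightarrow> 1 \<le> k \<and> k < n \<and>
     (\<forall>i\<in>{2..n}. \<forall>j\<in>{1..n}.
        opr (q i) (q j) = opr (q (idx_mod n (i - 1))) (q (idx_mod n (j - k))))"

(* The groupoid (Z_m, .) with x . y = a x + (1-a) y mod m, carrier represented as {0..m-1}. *)
definition zm_op :: "int \<Rightarrow> int \<Rightarrow> int \<Rightarrow> int \<Rightarrow> int" where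
  "zm_op m a x y = (a * x + (1 - a) * y) mod m"

definition zm_ord :: "int \<Rightarrow> int" where
  "zm_ord i = i - 1"

end

theory Submission
  imports Defs
begin

text \<open>Comparing the products at positions (i, j) and (i - 1, j - k) shows that
  k-translatability amounts to the single linear congruence (a - 1) k = a. Under the
  quadratical condition a - 1 is invertible modulo m, with inverse -2a, so this congruence
  has exactly one solution modulo m; that solution is neither 0, 1 nor -1 modulo m, since
  each of these would force 0 = 1 modulo m.\<close>

lemma k_translatable_zm_op_iff:
  fixes m a k :: int
  assumes "m > 1"
  shows "k_translatable (zm_op m a) zm_ord m k \<longleftrightarrow> k \<in> {1..m-1} \<and> [(a - 1) * k = a] (mod m)"
proof -
  have step_iff: "zm_op m a (zm_ord i) (zm_ord j)
        = zm_op m a (zm_ord (idx_mod m (i - 1))) (zm_ord (idx_mod m (j - k)))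
      \<longleftrightarrow> [(a - 1) * k = a] (mod m)" if "i \<in> {2..m}" for i j
  proof -
    have "idx_mod m (i - 1) = i - 1" "(i - 2) mod m = i - 2"
      using that by (simp_all add: idx_mod_def)
    then have "zm_op m a (zm_ord (idx_mod m (i - 1))) (zm_ord (idx_mod m (j - k)))
        = (a * (i - 2) + (1 - a) * ((j - k - 1) mod m)) mod m"
      by (simp add: zm_op_def zm_ord_def idx_mod_def)
    also have "\<dots> = (a * (i - 2) + (1 - a) * (j - k - 1)) mod m"
      by (metis mod_add_right_eq mod_mult_right_eq)
    finally have "zm_op m a (zm_ord i) (zm_ord j)
        = zm_op m a (zm_ord (idx_mod m (i - 1))) (zm_ord (idx_mod m (j - k)))
      \<longleftrightarrow> [a * (i - 2) + (1 - a) * (j - k - 1) = a * (i - 1) + (1 - a) * (j - 1)] (mod m)"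
      by (auto simp: zm_op_def zm_ord_def cong_def)
    also have "\<dots> \<longleftrightarrow> [(a - 1) * k + (a * (i - 2) + (1 - a) * (j - 1))
                         = a + (a * (i - 2) + (1 - a) * (j - 1))] (mod m)"
      by (simp add: algebra_simps)
    also have "\<dots> \<longleftrightarrow> [(a - 1) * k = a] (mod m)"
      by (rule cong_add_rcancel)
    finally show ?thesis .
  qed
  show ?thesis
  proof
    assume "k_translatable (zm_op m a) zm_ord m k"
    with assms step_iff[of 2 1] show "k \<in> {1..m-1} \<and> [(a - 1) * k = a] (mod m)"
      unfolding k_translatable_def by auto
  next
    assume "k \<in> {1..m-1} \<and> [(a - 1) * k = a] (mod m)"
    with step_iff show "k_translatable (zm_op m a) zm_ord m k"
      unfolding k_translatable_def by auto
  qed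
qed

lemma ex1_cong_mult_solution_int:
  fixes c b m :: int
  assumes "m > 0" and "coprime c m"
  shows "\<exists>!k. k \<in> {0..<m} \<and> [c * k = b] (mod m)"
proof -
  obtain x where "[c * x = b] (mod m)"
    using cong_solve_dvd_int[of c m b] assms(2) by auto
  then have "[c * (x mod m) = b] (mod m)"
    by (metis cong_def mod_mult_right_eq)
  moreover have "x mod m \<in> {0..<m}"
    using assms(1) by simp
  moreover have "k = k'" if "k \<in> {0..<m}" "k' \<in> {0..<m}"
      "[c * k = b] (mod m)" "[c * k' = b] (mod m)" for k k'
  proof -
    have "[c * k = c * k'] (mod m)"
      using that(3,4) by (metis cong_sym cong_trans)
    then have "[k = k'] (mod m)"
      using assms(2) by (simp add: cong_mult_lcancel)
    with that(1,2) show ?thesis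
      by (auto intro: cong_less_imp_eq_int)
  qed
  ultimately show ?thesis
    by blast
qed

lemma coprime_pred_if_quadratical:
  fixes m a :: int
  assumes "[2 * a^2 - 2 * a + 1 = 0] (mod m)"
  shows "coprime (a - 1) m"
proof -
  have "(a - 1) * (-2 * a) = 1 - (2 * a^2 - 2 * a + 1)"
    by (simp add: algebra_simps power2_eq_square)
  also have "[\<dots> = 1 - 0] (mod m)"
    using assms by (intro cong_diff cong_refl)
  finally have "[(a - 1) * (-2 * a) = 1] (mod m)"
    by simp
  then show ?thesis
    unfolding coprime_iff_invertible_int by blast
qed

lemma quadratical_translation_nondegenerate:
  fixes m a k :: int
  assumes "m > 1" and "[2 * a^2 - 2 * a + 1 = 0] (mod m)"
    and "[(a - 1) * k = a] (mod m)" and "k \<in> {0..<m}"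
  shows "1 < k \<and> k < m - 1"
proof -
  have quad: "m dvd 2 * a^2 - 2 * a + 1"
    using assms(2) by (simp add: cong_0_iff)
  have no_unit: "\<not> m dvd 1"
    using assms(1) by simp
  have "k \<noteq> 0"
  proof
    assume "k = 0"
    with assms(3) have "m dvd a"
      by (simp add: cong_iff_dvd_diff)
    then have "m dvd (2 * a^2 - 2 * a + 1) - a * (2 * a - 2)"
      using quad by (intro dvd_diff dvd_mult2)
    with no_unit show False
      by (simp add: algebra_simps power2_eq_square)
  qed
  moreover have "k \<noteq> 1"
  proof
    assume "k = 1"
    with assms(3) have "m dvd 1"
      by (simp add: cong_iff_dvd_diff)
    with no_unit show False ..
  qed
  moreover have "k \<noteq> m - 1"
  proof
    assume "k = m - 1"
    with assms(3) have "m dvd (a - 1) * (m - 1) - a"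
      by (simp add: cong_iff_dvd_diff)
    moreover have "(a - 1) * (m - 1) - a = (a - 1) * m - (2 * a - 1)"
      by (simp add: algebra_simps)
    ultimately have "m dvd 2 * a - 1"
      by (metis dvd_diff_right_iff dvd_triv_right)
    then have "m dvd 2 * (2 * a^2 - 2 * a + 1) - (2 * a - 1)^2"
      using quad by (intro dvd_diff dvd_mult) (simp_all add: power2_eq_square)
    with no_unit show False
      by (simp add: algebra_simps power2_eq_square)
  qed
  ultimately show ?thesis
    using assms(4) by auto
qed

theorem theorem9p3:
  fixes m a :: int
  assumes "m > 1" and "0 \<le> a" and "a < m"
    and "[2 * a^2 - 2 * a + 1 = 0] (mod m)"
  shows "(\<exists>!k. k \<in> {1..m-1} \<and> k_translatable (zm_op m a) zm_ord m k) \<and>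
         (\<forall>k\<in>{1..m-1}. k_translatable (zm_op m a) zm_ord m k \<longrightarrow>
            [(a - 1) * k = a] (mod m) \<and> 1 < k \<and> k < m - 1)"
proof -
  have bounds: "1 < k \<and> k < m - 1" if "k \<in> {0..<m}" "[(a - 1) * k = a] (mod m)" for k
    using quadratical_translation_nondegenerate assms(1,4) that by blast
  obtain k0 where k0: "k0 \<in> {0..<m}" "[(a - 1) * k0 = a] (mod m)"
    and unique: "\<And>k. k \<in> {0..<m} \<Longrightarrow> [(a - 1) * k = a] (mod m) \<Longrightarrow> k = k0"
    using ex1_cong_mult_solution_int[OF _ coprime_pred_if_quadratical[OF assms(4)], of a] assms(1)
    by auto
  have k0_range: "k0 \<in> {1..m-1}"
    using k0 bounds[OF k0] by auto
  show ?thesis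
    unfolding k_translatable_zm_op_iff[OF assms(1)]
  proof
    show "\<exists>!k. k \<in> {1..m-1} \<and> k \<in> {1..m-1} \<and> [(a - 1) * k = a] (mod m)"
      using k0_range k0(2) unique by (intro ex1I[of _ k0]) auto
    show "\<forall>k\<in>{1..m-1}. k \<in> {1..m-1} \<and> [(a - 1) * k = a] (mod m) \<longrightarrow>
            [(a - 1) * k = a] (mod m) \<and> 1 < k \<and> k < m - 1"
      using bounds by auto
  qed
qed

end
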